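(* Let $(X,d)$ be a complete metric space, fix $\lambda\in(0,1)$, and let $W:X\times X\times[0,1]\to P_{cl}(X)$ be a mapping such that (i) $W(x,x,\mu)=\{x\}$ for all $x\in X$, $\mu\in(0,1)$, and (ii) for $\mu\in(0,1)$ and $x,y\in X$, $W(x,y,\mu)=\{x\}$ implies $y=x$. Let $T:X\to P_{cl}(X)$ be a multivalued operator with $SFix(T)\neq\emptyset$ and let $T_W(x)=W(x,T(x),\lambda):=\bigcup_{y\in T(x)}W(x,y,\lambda)$ be the Takahashi admissible perturbation of $T$. Suppose there exist $\alpha,\beta,\gamma\ge0$ with $\alpha+\beta+\gamma<1$ such that $$H(W(x,T(x),\lambda),W(y,T(y),\lambda))\le\alpha d(x,y)+\beta D(x,W(y,T(y),\lambda))+\gamma D(y,W(x,T(x),\lambda))$$ for all $x,y\in X$. Then: (i) $Fix(T)=SFix(T)=\{x^*\}$ for some $x^*\in X$; (ii) if moreover there exists $l\in(0,1)$ with $H(T(x),\{x^*\})\le l\,H(W(x,T(x),\lambda),\{x^*\})$ for all $x\in X$, then $H(T^n(x),\{x^*\})\to0$ for each $x\in X$; (iii) if moreover there exists $L>0$ with $D(x,W(x,T(x),\lambda))\le L\,D(x,T(x))$ for all $x\in X$, then for some $\xi\in(0,1)$, $$d(x,x^* )\le\frac{(1+\gamma)L}{(1-\alpha-\beta)\xi}D(x,T(x))\quad\text{for all }x\in X.$$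
   Context: $P_{cl}(X)$ is the family of nonempty closed subsets of $X$. $Fix(T)=\{x:x\in T(x)\}$, $SFix(T)=\{x:T(x)=\{x\}\}$. For nonempty $A,B\subseteq X$: $D(a,B)=\inf_{b\in B}d(a,b)$, $e(A,B)=\sup_{a\in A}D(a,B)$, $H(A,B)=\max\{e(A,B),e(B,A)\}$. Iterates: $T^0(x)=\{x\}$, $T^n(x)=\bigcup_{y\in T^{n-1}(x)}T(y)$. *)

theory Defs
  imports "HOL-Analysis.Analysis"
begin

definition Fix :: "('a \<Rightarrow> 'a set) \<Rightarrow> 'a set" where
  "Fix T = {x. x \<in> T x}"

definition SFix :: "('a \<Rightarrow> 'a set) \<Rightarrow> 'a set" where
  "SFix T = {x. T x = {x}}"

abbreviation Dist :: "'a::metric_space \<Rightarrow> 'a set \<Rightarrow> real" where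
  "Dist a B \<equiv> infdist a B"

text \<open>Excess e(A,B) and Pompeiu-Hausdorff H(A,B), valued in the extended reals
  (they may be infinite for unbounded sets).\<close>
definition excess :: "'a::metric_space set \<Rightarrow> 'a set \<Rightarrow> ereal" where
  "excess A B = (SUP a\<in>A. ereal (infdist a B))"

definition Hdist :: "'a::metric_space set \<Rightarrow> 'a set \<Rightarrow> ereal" where
  "Hdist A B = max (excess A B) (excess B A)"

definition Wset :: "('a \<Rightarrow> 'a \<Rightarrow> real \<Rightarrow> 'a set) \<Rightarrow> 'a \<Rightarrow> 'a set \<Rightarrow> real \<Rightarrow> 'a set" where
  "Wset W x A \<mu> = (\<Union>y\<in>A. W x y \<mu>)"

fun Titer :: "('a \<Rightarrow> 'a set) \<Rightarrow> nat \<Rightarrow> 'a \<Rightarrow> 'a set" where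
  "Titer T 0 x = {x}"
| "Titer T (Suc n) x = (\<Union>y\<in>Titer T n x. T y)"

end

theory Submission
  imports Defs
begin

text \<open>Let \<open>x\<^sup>*\<close> be a strict fixed point of \<open>T\<close>; then \<open>T\<^sub>W(x\<^sup>*) = {x\<^sup>*}\<close>. Taking \<open>y = x\<^sup>*\<close> in the
  Reich-type condition and solving for \<open>D(x\<^sup>*, T\<^sub>W x)\<close> shows that every point of \<open>T\<^sub>W x\<close> lies
  within \<open>k d(x, x\<^sup>*)\<close> of \<open>x\<^sup>*\<close>, where \<open>k = (\<alpha> + \<beta>) / (1 - \<gamma>) < 1\<close>. A fixed point \<open>u\<close> of \<open>T\<close> lies
  in \<open>T\<^sub>W u\<close>, hence \<open>d(u, x\<^sup>*) \<le> k d(u, x\<^sup>*)\<close> and \<open>u = x\<^sup>*\<close>. Under the hypothesis of (ii) the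
  sets \<open>T x\<close> are attracted to \<open>x\<^sup>*\<close> with factor \<open>l k\<close>, so the iterates shrink geometrically.
  For (iii) the triangle inequality gives \<open>(1 - k) d(x, x\<^sup>*) \<le> D(x, T\<^sub>W x) \<le> L D(x, T x)\<close>,
  and \<open>\<xi> = (1 - \<alpha> - \<beta> - \<gamma>) / 2\<close> makes the stated constant dominate \<open>L / (1 - k)\<close>.\<close>

lemma Hdist_singleton_le_iff:
  fixes A :: "'a::metric_space set"
  assumes "A \<noteq> {}"
  shows "Hdist A {z} \<le> ereal c \<longleftrightarrow> (\<forall>a\<in>A. dist a z \<le> c)"
proof
  assume H: "Hdist A {z} \<le> ereal c"
  show "\<forall>a\<in>A. dist a z \<le> c"
  proof
    fix a assume "a \<in> A"
    then have "ereal (infdist a {z}) \<le> excess A {z}"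
      unfolding excess_def by (rule SUP_upper)
    also have "\<dots> \<le> Hdist A {z}" unfolding Hdist_def by simp
    also have "\<dots> \<le> ereal c" by (rule H)
    finally show "dist a z \<le> c" by simp
  qed
next
  assume bound: "\<forall>a\<in>A. dist a z \<le> c"
  obtain a0 where "a0 \<in> A" using assms by blast
  then have "infdist z A \<le> c" using bound by (intro infdist_le2) (auto simp: dist_commute)
  then have "excess {z} A \<le> ereal c" unfolding excess_def by simp
  moreover have "excess A {z} \<le> ereal c"
    unfolding excess_def using bound by (auto intro!: SUP_least)
  ultimately show "Hdist A {z} \<le> ereal c" unfolding Hdist_def by simp
qed

lemma Hdist_nonneg:
  fixes A B :: "'a::metric_space set"
  assumes "B \<noteq> {}"
  shows "0 \<le> Hdist A B"
proof -
  obtain b where "b \<in> B" using assms by blast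
  then have "ereal 0 \<le> excess B A"
    unfolding excess_def by (rule SUP_upper2) (simp add: infdist_nonneg)
  then show ?thesis unfolding Hdist_def zero_ereal_def by (rule max.coboundedI2)
qed

lemma Hdist_singleton_tendsto_0:
  fixes A :: "nat \<Rightarrow> 'a::metric_space set"
  assumes "\<And>n. A n \<noteq> {}" "\<And>n a. a \<in> A n \<Longrightarrow> dist a z \<le> f n" "f \<longlonglongrightarrow> 0"
  shows "(\<lambda>n. Hdist (A n) {z}) \<longlonglongrightarrow> 0"
proof (rule tendsto_sandwich)
  show "\<forall>\<^sub>F n in sequentially. 0 \<le> Hdist (A n) {z}"
    by (simp add: Hdist_nonneg)
  show "\<forall>\<^sub>F n in sequentially. Hdist (A n) {z} \<le> ereal (f n)"
    using assms(1,2) by (simp add: Hdist_singleton_le_iff)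
  show "(\<lambda>n. ereal (f n)) \<longlonglongrightarrow> 0"
    using assms(3) by (simp add: zero_ereal_def tendsto_ereal)
qed simp

lemma infdist_ge:
  fixes A :: "'a::metric_space set"
  assumes "A \<noteq> {}" "\<And>a. a \<in> A \<Longrightarrow> c \<le> dist x a"
  shows "c \<le> infdist x A"
  using assms by (auto simp: infdist_notempty intro!: cINF_greatest)

lemma Titer_nonempty:
  assumes "\<And>x. T x \<noteq> {}"
  shows "Titer T n x \<noteq> {}"
  using assms by (induction n) auto

lemma Titer_dist_le_power:
  fixes T :: "'a::metric_space \<Rightarrow> 'a set"
  assumes "0 \<le> r" "\<And>x b. b \<in> T x \<Longrightarrow> dist b z \<le> r * dist x z"
  shows "b \<in> Titer T n x \<Longrightarrow> dist b z \<le> r ^ n * dist x z"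
proof (induction n arbitrary: b)
  case (Suc n)
  then obtain y where y: "y \<in> Titer T n x" "b \<in> T y" by auto
  have "dist b z \<le> r * dist y z" using assms(2) y(2) .
  also have "\<dots> \<le> r * (r ^ n * dist x z)" using Suc.IH[OF y(1)] assms(1) by (rule mult_left_mono)
  finally show ?case by simp
qed simp

lemma Reich_condition_attracts_to_strict_fixpoint:
  fixes S :: "'a::metric_space \<Rightarrow> 'a set"
  assumes fix_z: "S z = {z}" and \<gamma>: "0 \<le> \<gamma>" "\<gamma> < 1"
    and Reich: "Hdist (S x) (S z)
        \<le> ereal (\<alpha> * dist x z + \<beta> * infdist x (S z) + \<gamma> * infdist z (S x))"
    and a: "a \<in> S x"
  shows "dist a z \<le> (\<alpha> + \<beta>) / (1 - \<gamma>) * dist x z"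
proof -
  define d where "d = dist x z"
  define \<delta> where "\<delta> = infdist z (S x)"
  have bound: "dist b z \<le> (\<alpha> + \<beta>) * d + \<gamma> * \<delta>" if "b \<in> S x" for b
    using Reich that a unfolding fix_z d_def \<delta>_def
    by (subst (asm) Hdist_singleton_le_iff) (auto simp: algebra_simps)
  have "\<delta> \<le> dist a z" unfolding \<delta>_def using infdist_le[OF a, of z] by (simp add: dist_commute)
  also have "\<dots> \<le> (\<alpha> + \<beta>) * d + \<gamma> * \<delta>" using bound[OF a] .
  finally have "\<gamma> * \<delta> \<le> \<gamma> * ((\<alpha> + \<beta>) * d / (1 - \<gamma>))"
    using \<gamma> by (intro mult_left_mono) (simp_all add: field_simps)
  then have "(\<alpha> + \<beta>) * d + \<gamma> * \<delta> \<le> (\<alpha> + \<beta>) / (1 - \<gamma>) * d"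
    using \<gamma> by (simp add: field_simps)
  then show ?thesis using bound[OF a] unfolding d_def by linarith
qed

context
  fixes S :: "'a::metric_space \<Rightarrow> 'a set" and z :: 'a and k :: real
  assumes attracts: "\<And>x a. a \<in> S x \<Longrightarrow> dist a z \<le> k * dist x z"
begin

lemma Fix_eq_SFix_eq_singleton_if_attracted:
  assumes "k < 1" "T z = {z}" "\<And>x. x \<in> T x \<Longrightarrow> x \<in> S x"
  shows "Fix T = {z}" "SFix T = {z}"
proof -
  have "u = z" if "u \<in> T u" for u
  proof -
    have "dist u z \<le> k * dist u z" using attracts assms(3) that by blast
    then have "(1 - k) * dist u z \<le> 0" by (simp add: algebra_simps)
    then show ?thesis using \<open>k < 1\<close> by (simp add: mult_le_0_iff)
  qed
  then show "Fix T = {z}" "SFix T = {z}"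
    using assms(2) unfolding Fix_def SFix_def by auto
qed

lemma Titer_Hdist_tendsto_0_if_attracted:
  assumes "0 \<le> k" "0 \<le> l" "l * k < 1"
    and "\<And>x. S x \<noteq> {}" "\<And>x. T x \<noteq> {}"
    and T_le_S: "\<And>x. Hdist (T x) {z} \<le> ereal l * Hdist (S x) {z}"
  shows "(\<lambda>n. Hdist (Titer T n x) {z}) \<longlonglongrightarrow> 0"
proof -
  have "dist b z \<le> (l * k) * dist y z" if "b \<in> T y" for y b
  proof -
    have "Hdist (S y) {z} \<le> ereal (k * dist y z)"
      using assms(4) attracts by (simp add: Hdist_singleton_le_iff)
    then have "ereal l * Hdist (S y) {z} \<le> ereal l * ereal (k * dist y z)"
      using \<open>0 \<le> l\<close> by (intro ereal_mult_left_mono) auto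
    with T_le_S have "Hdist (T y) {z} \<le> ereal (l * k * dist y z)"
      by (metis mult.assoc order_trans times_ereal.simps(1))
    then show ?thesis using assms(5) that by (simp add: Hdist_singleton_le_iff)
  qed
  then have "\<And>n b. b \<in> Titer T n x \<Longrightarrow> dist b z \<le> (l * k) ^ n * dist x z"
    using assms(1,2) by (intro Titer_dist_le_power) auto
  moreover have "(\<lambda>n. (l * k) ^ n * dist x z) \<longlonglongrightarrow> 0"
    using assms(1-3) by (intro tendsto_mult_left_zero LIMSEQ_power_zero) auto
  ultimately show ?thesis
    using Titer_nonempty[OF assms(5)] by (intro Hdist_singleton_tendsto_0) auto
qed

lemma dist_le_infdist_if_attracted:
  assumes "k < 1" "S x \<noteq> {}"
  shows "dist x z \<le> infdist x (S x) / (1 - k)"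
proof -
  have "(1 - k) * dist x z \<le> infdist x (S x)"
  proof (rule infdist_ge[OF assms(2)])
    fix a assume "a \<in> S x"
    then show "(1 - k) * dist x z \<le> dist x a"
      using attracts[of a x] dist_triangle[of x z a] by (simp add: algebra_simps dist_commute)
  qed
  then show ?thesis using assms(1) by (simp add: field_simps)
qed

end

lemma Reich_error_constant_bound:
  fixes \<alpha> \<beta> \<gamma> :: real
  assumes "\<alpha> \<ge> 0" "\<beta> \<ge> 0" "\<gamma> \<ge> 0" "\<alpha> + \<beta> + \<gamma> < 1"
  obtains \<xi> where "0 < \<xi>" "\<xi> < 1"
    "\<And>L. 0 \<le> L \<Longrightarrow> L / (1 - (\<alpha> + \<beta>) / (1 - \<gamma>)) \<le> (1 + \<gamma>) * L / ((1 - \<alpha> - \<beta>) * \<xi>)"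
proof
  define c where "c = 1 - \<alpha> - \<beta> - \<gamma>"
  show "0 < c / 2" "c / 2 < 1" using assms unfolding c_def by auto
  fix L :: real assume "0 \<le> L"
  have pos: "0 < 1 - \<gamma>" "0 < c" "0 < 1 - \<alpha> - \<beta>" using assms unfolding c_def by auto
  have "1 - (\<alpha> + \<beta>) / (1 - \<gamma>) = c / (1 - \<gamma>)"
    using pos unfolding c_def by (simp add: field_simps)
  then have "L / (1 - (\<alpha> + \<beta>) / (1 - \<gamma>)) = (1 - \<gamma>) * (1 - \<alpha> - \<beta>) * L / ((1 - \<alpha> - \<beta>) * c)"
    using pos by simp
  also have "\<dots> \<le> 2 * (1 + \<gamma>) * L / ((1 - \<alpha> - \<beta>) * c)"
    using assms pos \<open>0 \<le> L\<close>
    by (intro divide_right_mono mult_right_mono order_trans[OF mult_left_le]) auto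
  also have "\<dots> = (1 + \<gamma>) * L / ((1 - \<alpha> - \<beta>) * (c / 2))"
    by simp
  finally show "L / (1 - (\<alpha> + \<beta>) / (1 - \<gamma>)) \<le> (1 + \<gamma>) * L / ((1 - \<alpha> - \<beta>) * (c / 2))" .
qed

theorem mainTheorem9:
  fixes W :: "'a::complete_space \<Rightarrow> 'a \<Rightarrow> real \<Rightarrow> 'a set"
    and T :: "'a \<Rightarrow> 'a set"
    and lam \<alpha> \<beta> \<gamma> :: real
  assumes lam: "0 < lam" "lam < 1"
    and W_cl: "\<And>x y \<mu>. \<mu> \<in> {0..1} \<Longrightarrow> W x y \<mu> \<noteq> {} \<and> closed (W x y \<mu>)"
    and W_diag: "\<And>x \<mu>. \<mu> \<in> {0<..<1} \<Longrightarrow> W x x \<mu> = {x}"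
    and W_sing: "\<And>x y \<mu>. \<mu> \<in> {0<..<1} \<Longrightarrow> W x y \<mu> = {x} \<Longrightarrow> y = x"
    and T_cl: "\<And>x. T x \<noteq> {} \<and> closed (T x)"
    and SFix_ne: "SFix T \<noteq> {}"
    and coef: "\<alpha> \<ge> 0" "\<beta> \<ge> 0" "\<gamma> \<ge> 0" "\<alpha> + \<beta> + \<gamma> < 1"
    and contr: "\<And>x y. Hdist (Wset W x (T x) lam) (Wset W y (T y) lam)
        \<le> ereal (\<alpha> * dist x y + \<beta> * Dist x (Wset W y (T y) lam)
                 + \<gamma> * Dist y (Wset W x (T x) lam))"
  shows "\<exists>xs. Fix T = {xs} \<and> SFix T = {xs}
     \<and> ((\<exists>l. 0 < l \<and> l < 1 \<and>
            (\<forall>x. Hdist (T x) {xs} \<le> ereal l * Hdist (Wset W x (T x) lam) {xs}))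
          \<longrightarrow> (\<forall>x. (\<lambda>n. Hdist (Titer T n x) {xs}) \<longlonglongrightarrow> 0))
     \<and> (\<forall>L>0. (\<forall>x. Dist x (Wset W x (T x) lam) \<le> L * Dist x (T x))
          \<longrightarrow> (\<exists>\<xi>. 0 < \<xi> \<and> \<xi> < 1 \<and>
                 (\<forall>x. dist x xs \<le> (1 + \<gamma>) * L / ((1 - \<alpha> - \<beta>) * \<xi>) * Dist x (T x))))"
proof -
  obtain z where z: "T z = {z}" using SFix_ne unfolding SFix_def by blast
  define TW where "TW x = Wset W x (T x) lam" for x
  define k where "k = (\<alpha> + \<beta>) / (1 - \<gamma>)"
  have W_diag_lam: "W x x lam = {x}" for x using W_diag lam by simp
  have TW_ne: "TW x \<noteq> {}" for x
    using T_cl[of x] W_cl[of lam] lam unfolding TW_def Wset_def by fastforce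
  have k: "0 \<le> k" "k < 1" using coef unfolding k_def by (auto simp: field_simps)
  have attracts: "dist a z \<le> k * dist x z" if "a \<in> TW x" for x a
    using contr[of x z] coef that unfolding k_def TW_def
    by (intro Reich_condition_attracts_to_strict_fixpoint[of "\<lambda>x. Wset W x (T x) lam"])
       (auto simp: Wset_def z W_diag_lam)
  have "x \<in> TW x" if "x \<in> T x" for x using that W_diag_lam unfolding TW_def Wset_def by blast
  then have Fix_SFix: "Fix T = {z}" "SFix T = {z}"
    using Fix_eq_SFix_eq_singleton_if_attracted[OF attracts] k z by blast+
  have iterates: "\<forall>x. (\<lambda>n. Hdist (Titer T n x) {z}) \<longlonglongrightarrow> 0"
    if "0 < l" "l < 1" "\<forall>x. Hdist (T x) {z} \<le> ereal l * Hdist (TW x) {z}" for l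
    using that k T_cl TW_ne mult_strict_mono[of l 1 k 1]
    by (intro allI Titer_Hdist_tendsto_0_if_attracted[OF attracts]) auto
  obtain \<xi> where \<xi>: "0 < \<xi>" "\<xi> < 1"
    and error_constant: "\<And>L. 0 \<le> L \<Longrightarrow> L / (1 - k) \<le> (1 + \<gamma>) * L / ((1 - \<alpha> - \<beta>) * \<xi>)"
    using Reich_error_constant_bound[OF coef] unfolding k_def by blast
  have error_bound: "dist x z \<le> (1 + \<gamma>) * L / ((1 - \<alpha> - \<beta>) * \<xi>) * Dist x (T x)"
    if L: "0 < L" "\<forall>x. Dist x (TW x) \<le> L * Dist x (T x)" for L x
  proof -
    have "dist x z \<le> Dist x (TW x) / (1 - k)"
      by (rule dist_le_infdist_if_attracted[OF attracts k(2) TW_ne])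
    also have "\<dots> \<le> L / (1 - k) * Dist x (T x)"
      using L(2) k(2) by (simp add: divide_right_mono)
    also have "\<dots> \<le> (1 + \<gamma>) * L / ((1 - \<alpha> - \<beta>) * \<xi>) * Dist x (T x)"
      using error_constant L(1) by (intro mult_right_mono infdist_nonneg) auto
    finally show ?thesis .
  qed
  show ?thesis
    unfolding TW_def[symmetric] using Fix_SFix iterates error_bound \<xi> by blast
qed

end
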